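(* Let $C\in\mathscr{C}$ and let $z_C\colon C\to Z_C$ be obtained as follows: choose a distinguished triangle $V\to U\overset{a}{\to}C\to V[1]$ with $U\in\mathcal{U},V\in\mathcal{V}$; choose a distinguished triangle $T[-1]\to S[-1]\overset{b}{\to}U\to T$ with $S\in\mathcal{S},T\in\mathcal{T}$; and choose a distinguished triangle $S[-1]\overset{a\circ b}{\to}C\overset{z_C}{\to}Z_C\to S$. Then for every $Y\in\mathscr{C}^+$, the map \[ -\circ\underline{z}_C\colon\underline{\mathscr{C}}^+(Z_C,Y)\to\underline{\mathscr{C}}(C,Y) \] is bijective.
   Context: $\mathscr{C}$ is a triangulated category with shift $[1]$; subcategories are full, additive, closed under isomorphisms and direct summands. $\mathrm{Ext}^1(X,Y)=\mathscr{C}(X,Y[1])$. $\mathcal{M}\ast\mathcal{N}$ is the full subcategory of objects $C$ admitting a distinguished triangle $M\to C\to N\to M[1]$ with $M\in\mathcal{M}$, $N\in\mathcal{N}$. A cotorsion pair $(\mathcal{U},\mathcal{V})$: $\mathrm{Ext}^1(\mathcal{U},\mathcal{V})=0$ and $\mathscr{C}=\mathcal{U}\ast\mathcal{V}[1]$. Fix a twin cotorsion pair, i.e. cotorsion pairs $(\mathcal{S},\mathcal{T}),(\mathcal{U},\mathcal{V})$ with $\mathrm{Ext}^1(\mathcal{S},\mathcal{V})=0$. Put $\mathcal{W}=\mathcal{T}\cap\mathcal{U}$, $\mathscr{C}^+=\mathcal{W}\ast\mathcal{V}[1]$. $\underline{\mathscr{C}}$ and $\underline{\mathscr{C}}^+$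 denote the ideal quotients of $\mathscr{C}$ and $\mathscr{C}^+$ by morphisms factoring through objects of $\mathcal{W}$, and $\underline{f}$ is the image of a morphism $f$. (One has $Z_C\in\mathscr{C}^+$.) *)

theory Defs
  imports Main
begin

text \<open>Objects are the elements of type 'o; morphisms are elements of type 'm;
Hom X Y is the set of morphisms X to Y. cmp g f is the composite "g after f".\<close>

record ('o, 'm) tcat =
  Hom  :: "'o \<Rightarrow> 'o \<Rightarrow> 'm set"
  cmp  :: "'m \<Rightarrow> 'm \<Rightarrow> 'm"
  idm  :: "'o \<Rightarrow> 'm"
  add  :: "'m \<Rightarrow> 'm \<Rightarrow> 'm"
  neg  :: "'m \<Rightarrow> 'm"
  zro  :: "'o \<Rightarrow> 'o \<Rightarrow> 'm"
  sh   :: "'o \<Rightarrow> 'o"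
  shm  :: "'m \<Rightarrow> 'm"
  dist :: "'o \<Rightarrow> 'o \<Rightarrow> 'o \<Rightarrow> 'm \<Rightarrow> 'm \<Rightarrow> 'm \<Rightarrow> bool"

definition iso :: "('o,'m) tcat \<Rightarrow> 'm \<Rightarrow> 'o \<Rightarrow> 'o \<Rightarrow> bool" where
  "iso K f X Y \<longleftrightarrow> f \<in> Hom K X Y \<and>
     (\<exists>g \<in> Hom K Y X. cmp K g f = idm K X \<and> cmp K f g = idm K Y)"

definition isomorphic :: "('o,'m) tcat \<Rightarrow> 'o \<Rightarrow> 'o \<Rightarrow> bool" where
  "isomorphic K X Y \<longleftrightarrow> (\<exists>f. iso K f X Y)"

definition is_zero :: "('o,'m) tcat \<Rightarrow> 'o \<Rightarrow> bool" where
  "is_zero K Z0 \<longleftrightarrow> (\<forall>X. Hom K Z0 X = {zro K Z0 X} \<and> Hom K X Z0 = {zro K X Z0})"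

definition is_biprod :: "('o,'m) tcat \<Rightarrow> 'o \<Rightarrow> 'o \<Rightarrow> 'o \<Rightarrow> bool" where
  "is_biprod K P X Y \<longleftrightarrow> (\<exists>i1 i2 p1 p2.
     i1 \<in> Hom K X P \<and> i2 \<in> Hom K Y P \<and> p1 \<in> Hom K P X \<and> p2 \<in> Hom K P Y \<and>
     cmp K p1 i1 = idm K X \<and> cmp K p2 i2 = idm K Y \<and>
     cmp K p1 i2 = zro K Y X \<and> cmp K p2 i1 = zro K X Y \<and>
     add K (cmp K i1 p1) (cmp K i2 p2) = idm K P)"

locale triangulated =
  fixes K :: "('o,'m) tcat"
  assumes
    cmp_closed: "\<And>X Y Z f g. f \<in> Hom K X Y \<Longrightarrow> g \<in> Hom K Y Z \<Longrightarrow> cmp K g f \<in> Hom K X Z"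
  and cmp_assoc: "\<And>W X Y Z f g h. f \<in> Hom K W X \<Longrightarrow> g \<in> Hom K X Y \<Longrightarrow> h \<in> Hom K Y Z \<Longrightarrow>
        cmp K h (cmp K g f) = cmp K (cmp K h g) f"
  and idm_closed: "\<And>X. idm K X \<in> Hom K X X"
  and idm_left: "\<And>X Y f. f \<in> Hom K X Y \<Longrightarrow> cmp K (idm K Y) f = f"
  and idm_right: "\<And>X Y f. f \<in> Hom K X Y \<Longrightarrow> cmp K f (idm K X) = f"
  and add_closed: "\<And>X Y f g. f \<in> Hom K X Y \<Longrightarrow> g \<in> Hom K X Y \<Longrightarrow> add K f g \<in> Hom K X Y"
  and add_assoc: "\<And>X Y f g h. f \<in> Hom K X Y \<Longrightarrow> g \<in> Hom K X Y \<Longrightarrow> h \<in> Hom K X Y \<Longrightarrow>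
        add K (add K f g) h = add K f (add K g h)"
  and add_comm: "\<And>X Y f g. f \<in> Hom K X Y \<Longrightarrow> g \<in> Hom K X Y \<Longrightarrow> add K f g = add K g f"
  and zro_closed: "\<And>X Y. zro K X Y \<in> Hom K X Y"
  and add_zro: "\<And>X Y f. f \<in> Hom K X Y \<Longrightarrow> add K f (zro K X Y) = f"
  and neg_closed: "\<And>X Y f. f \<in> Hom K X Y \<Longrightarrow> neg K f \<in> Hom K X Y"
  and add_neg: "\<And>X Y f. f \<in> Hom K X Y \<Longrightarrow> add K f (neg K f) = zro K X Y"
  and cmp_add_left: "\<And>X Y Z f g h. f \<in> Hom K X Y \<Longrightarrow> g \<in> Hom K X Y \<Longrightarrow> h \<in> Hom K Y Z \<Longrightarrow>
        cmp K h (add K f g) = add K (cmp K h f) (cmp K h g)"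
  and cmp_add_right: "\<And>X Y Z f g h. f \<in> Hom K Y Z \<Longrightarrow> g \<in> Hom K Y Z \<Longrightarrow> h \<in> Hom K X Y \<Longrightarrow>
        cmp K (add K f g) h = add K (cmp K f h) (cmp K g h)"
  and zero_exists: "\<exists>Z0. is_zero K Z0"
  and biprod_exists: "\<And>X Y. \<exists>P. is_biprod K P X Y"
  and shm_closed: "\<And>X Y f. f \<in> Hom K X Y \<Longrightarrow> shm K f \<in> Hom K (sh K X) (sh K Y)"
  and shm_cmp: "\<And>X Y Z f g. f \<in> Hom K X Y \<Longrightarrow> g \<in> Hom K Y Z \<Longrightarrow>
        shm K (cmp K g f) = cmp K (shm K g) (shm K f)"
  and shm_idm: "\<And>X. shm K (idm K X) = idm K (sh K X)"
  and shm_add: "\<And>X Y f g. f \<in> Hom K X Y \<Longrightarrow> g \<in> Hom K X Y \<Longrightarrow>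
        shm K (add K f g) = add K (shm K f) (shm K g)"
  and shm_fully_faithful: "\<And>X Y. bij_betw (shm K) (Hom K X Y) (Hom K (sh K X) (sh K Y))"
  and sh_ess_surj: "\<And>Y. \<exists>X. isomorphic K (sh K X) Y"
  and dist_typed: "\<And>X Y Z f g h. dist K X Y Z f g h \<Longrightarrow>
        f \<in> Hom K X Y \<and> g \<in> Hom K Y Z \<and> h \<in> Hom K Z (sh K X)"
  and dist_iso: "\<And>X Y Z f g h X' Y' Z' f' g' h' \<alpha> \<beta> \<gamma>.
        dist K X Y Z f g h \<Longrightarrow>
        f' \<in> Hom K X' Y' \<Longrightarrow> g' \<in> Hom K Y' Z' \<Longrightarrow> h' \<in> Hom K Z' (sh K X') \<Longrightarrow>
        iso K \<alpha> X X' \<Longrightarrow> iso K \<beta> Y Y' \<Longrightarrow> iso K \<gamma> Z Z' \<Longrightarrow>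
        cmp K f' \<alpha> = cmp K \<beta> f \<Longrightarrow> cmp K g' \<beta> = cmp K \<gamma> g \<Longrightarrow>
        cmp K h' \<gamma> = cmp K (shm K \<alpha>) h \<Longrightarrow> dist K X' Y' Z' f' g' h'"
  and dist_id: "\<And>X Z0. is_zero K Z0 \<Longrightarrow> dist K X X Z0 (idm K X) (zro K X Z0) (zro K Z0 (sh K X))"
  and dist_exists: "\<And>X Y f. f \<in> Hom K X Y \<Longrightarrow> \<exists>Z g h. dist K X Y Z f g h"
  and dist_rotate: "\<And>X Y Z f g h. dist K X Y Z f g h \<longleftrightarrow> dist K Y Z (sh K X) g h (neg K (shm K f))"
  and dist_morph: "\<And>X Y Z f g h X' Y' Z' f' g' h' \<alpha> \<beta>.
        dist K X Y Z f g h \<Longrightarrow> dist K X' Y' Z' f' g' h' \<Longrightarrow>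
        \<alpha> \<in> Hom K X X' \<Longrightarrow> \<beta> \<in> Hom K Y Y' \<Longrightarrow> cmp K \<beta> f = cmp K f' \<alpha> \<Longrightarrow>
        \<exists>\<gamma> \<in> Hom K Z Z'. cmp K \<gamma> g = cmp K g' \<beta> \<and> cmp K h' \<gamma> = cmp K (shm K \<alpha>) h"
  and octahedral: "\<And>X Y Z Z' X' Y' f g u u' v v' w w'.
        dist K X Y Z' f u u' \<Longrightarrow> dist K Y Z X' g v v' \<Longrightarrow> dist K X Z Y' (cmp K g f) w w' \<Longrightarrow>
        \<exists>c d. dist K Z' Y' X' c d (cmp K (shm K u) v') \<and>
              cmp K c u = cmp K w g \<and> cmp K w' c = u' \<and>
              cmp K d w = v \<and> cmp K v' d = cmp K (shm K f) w'"

text \<open>Subcategories: full, additive, closed under isomorphisms and direct summands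
(identified with their class of objects).\<close>

definition subcat :: "('o,'m) tcat \<Rightarrow> 'o set \<Rightarrow> bool" where
  "subcat K \<X> \<longleftrightarrow>
     (\<forall>X Y. X \<in> \<X> \<and> isomorphic K X Y \<longrightarrow> Y \<in> \<X>) \<and>
     (\<exists>Z0 \<in> \<X>. is_zero K Z0) \<and>
     (\<forall>P X Y. X \<in> \<X> \<and> Y \<in> \<X> \<and> is_biprod K P X Y \<longrightarrow> P \<in> \<X>) \<and>
     (\<forall>P X Y. P \<in> \<X> \<and> is_biprod K P X Y \<longrightarrow> X \<in> \<X>)"

text \<open>Ext^1(X,Y) = Hom(X, Y[1]) vanishes on the given classes.\<close>
definition ext1_zero :: "('o,'m) tcat \<Rightarrow> 'o set \<Rightarrow> 'o set \<Rightarrow> bool" where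
  "ext1_zero K \<X> \<Y> \<longleftrightarrow> (\<forall>X \<in> \<X>. \<forall>Y \<in> \<Y>. Hom K X (sh K Y) = {zro K X (sh K Y)})"

definition shift_sub :: "('o,'m) tcat \<Rightarrow> 'o set \<Rightarrow> 'o set" where
  "shift_sub K \<X> = {N. \<exists>X \<in> \<X>. isomorphic K N (sh K X)}"

definition ext_star :: "('o,'m) tcat \<Rightarrow> 'o set \<Rightarrow> 'o set \<Rightarrow> 'o set" where
  "ext_star K \<M> \<N> = {C. \<exists>M \<in> \<M>. \<exists>N \<in> \<N>. \<exists>f g h. dist K M C N f g h}"

definition cotorsion_pair :: "('o,'m) tcat \<Rightarrow> 'o set \<Rightarrow> 'o set \<Rightarrow> bool" where
  "cotorsion_pair K \<U> \<V> \<longleftrightarrow> subcat K \<U> \<and> subcat K \<V> \<and>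
     ext1_zero K \<U> \<V> \<and> ext_star K \<U> (shift_sub K \<V>) = UNIV"

definition twin_cotorsion_pair ::
  "('o,'m) tcat \<Rightarrow> 'o set \<Rightarrow> 'o set \<Rightarrow> 'o set \<Rightarrow> 'o set \<Rightarrow> bool" where
  "twin_cotorsion_pair K \<S> \<T> \<U> \<V> \<longleftrightarrow>
     cotorsion_pair K \<S> \<T> \<and> cotorsion_pair K \<U> \<V> \<and> ext1_zero K \<S> \<V>"

text \<open>Ideal quotient by morphisms factoring through objects of W.\<close>
definition factors_through :: "('o,'m) tcat \<Rightarrow> 'o set \<Rightarrow> 'o \<Rightarrow> 'o \<Rightarrow> 'm \<Rightarrow> bool" where
  "factors_through K \<W> X Y f \<longleftrightarrow>
     (\<exists>W \<in> \<W>. \<exists>g \<in> Hom K X W. \<exists>h \<in> Hom K W Y. f = cmp K h g)"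

definition stable_rel :: "('o,'m) tcat \<Rightarrow> 'o set \<Rightarrow> 'o \<Rightarrow> 'o \<Rightarrow> ('m \<times> 'm) set" where
  "stable_rel K \<W> X Y = {(f, g). f \<in> Hom K X Y \<and> g \<in> Hom K X Y \<and>
       factors_through K \<W> X Y (add K f (neg K g))}"

text \<open>Hom-set of the ideal quotient, and the class (underline f) of a morphism.\<close>
definition stable_hom :: "('o,'m) tcat \<Rightarrow> 'o set \<Rightarrow> 'o \<Rightarrow> 'o \<Rightarrow> 'm set set" where
  "stable_hom K \<W> X Y = Hom K X Y // stable_rel K \<W> X Y"

definition stclass :: "('o,'m) tcat \<Rightarrow> 'o set \<Rightarrow> 'o \<Rightarrow> 'o \<Rightarrow> 'm \<Rightarrow> 'm set" where
  "stclass K \<W> X Y f = stable_rel K \<W> X Y `` {f}"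

end

theory Submission
  imports Defs
begin

text \<open>Write \<open>S' = S[-1]\<close> and \<open>s = a \<circ> b : S' \<rightarrow> C\<close>, so that \<open>S' \<rightarrow> C \<rightarrow> Z\<^sub>C\<close> is
  distinguished. Since \<open>\<W> \<subseteq> \<T>\<close>, \<open>Hom(S', \<W>) = 0\<close>; since \<open>Hom(\<U>, \<V>[1]) = 0\<close> and
  \<open>Hom(\<S>, \<V>[1]) = 0\<close>, every morphism from \<open>U\<close> or from \<open>S = S'[1]\<close> to \<open>Y \<in> \<W> * \<V>[1]\<close>
  factors through the \<open>\<W>\<close>-part of \<open>Y\<close>. Consequently every \<open>c : C \<rightarrow> Y\<close> kills \<open>s\<close> and
  extends along \<open>z\<^sub>C\<close> (surjectivity), and \<open>d \<circ> z\<^sub>C\<close> factors through \<open>\<W>\<close> only if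
  \<open>d\<close> does (injectivity).\<close>

locale additive_category =
  fixes K :: "('o,'m) tcat"
  assumes cmp_closed: "\<And>X Y Z f g. f \<in> Hom K X Y \<Longrightarrow> g \<in> Hom K Y Z \<Longrightarrow> cmp K g f \<in> Hom K X Z"
  and cmp_assoc: "\<And>W X Y Z f g h. f \<in> Hom K W X \<Longrightarrow> g \<in> Hom K X Y \<Longrightarrow> h \<in> Hom K Y Z \<Longrightarrow>
        cmp K h (cmp K g f) = cmp K (cmp K h g) f"
  and idm_closed: "\<And>X. idm K X \<in> Hom K X X"
  and idm_left: "\<And>X Y f. f \<in> Hom K X Y \<Longrightarrow> cmp K (idm K Y) f = f"
  and idm_right: "\<And>X Y f. f \<in> Hom K X Y \<Longrightarrow> cmp K f (idm K X) = f"
  and add_closed: "\<And>X Y f g. f \<in> Hom K X Y \<Longrightarrow> g \<in> Hom K X Y \<Longrightarrow> add K f g \<in> Hom K X Y"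
  and add_assoc: "\<And>X Y f g h. f \<in> Hom K X Y \<Longrightarrow> g \<in> Hom K X Y \<Longrightarrow> h \<in> Hom K X Y \<Longrightarrow>
        add K (add K f g) h = add K f (add K g h)"
  and add_comm: "\<And>X Y f g. f \<in> Hom K X Y \<Longrightarrow> g \<in> Hom K X Y \<Longrightarrow> add K f g = add K g f"
  and zro_closed: "\<And>X Y. zro K X Y \<in> Hom K X Y"
  and add_zro: "\<And>X Y f. f \<in> Hom K X Y \<Longrightarrow> add K f (zro K X Y) = f"
  and neg_closed: "\<And>X Y f. f \<in> Hom K X Y \<Longrightarrow> neg K f \<in> Hom K X Y"
  and add_neg: "\<And>X Y f. f \<in> Hom K X Y \<Longrightarrow> add K f (neg K f) = zro K X Y"
  and cmp_add_left: "\<And>X Y Z f g h. f \<in> Hom K X Y \<Longrightarrow> g \<in> Hom K X Y \<Longrightarrow> h \<in> Hom K Y Z \<Longrightarrow>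
        cmp K h (add K f g) = add K (cmp K h f) (cmp K h g)"
  and cmp_add_right: "\<And>X Y Z f g h. f \<in> Hom K Y Z \<Longrightarrow> g \<in> Hom K Y Z \<Longrightarrow> h \<in> Hom K X Y \<Longrightarrow>
        cmp K (add K f g) h = add K (cmp K f h) (cmp K g h)"
  and biprod_exists: "\<And>X Y. \<exists>P. is_biprod K P X Y"

sublocale triangulated \<subseteq> additive_category
  by unfold_locales
    (fact cmp_closed cmp_assoc idm_closed idm_left idm_right add_closed add_assoc add_comm
      zro_closed add_zro neg_closed add_neg cmp_add_left cmp_add_right biprod_exists)+

context additive_category
begin

lemma zro_add: "f \<in> Hom K X Y \<Longrightarrow> add K (zro K X Y) f = f"
  using add_comm[OF _ zro_closed] add_zro by metis

lemma neg_unique: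
  assumes a: "a \<in> Hom K X Y" and b: "b \<in> Hom K X Y" and ab: "add K a b = zro K X Y"
  shows "b = neg K a"
proof -
  have na: "neg K a \<in> Hom K X Y" using neg_closed[OF a] .
  have "b = add K b (add K a (neg K a))" using add_neg[OF a] add_zro[OF b] by simp
  also have "\<dots> = add K (add K a b) (neg K a)" using add_assoc[OF b a na] add_comm[OF a b] by simp
  also have "\<dots> = neg K a" using ab zro_add[OF na] by simp
  finally show ?thesis .
qed

lemma neg_neg: "a \<in> Hom K X Y \<Longrightarrow> neg K (neg K a) = a"
  using neg_unique[OF neg_closed] add_comm[OF _ neg_closed] add_neg by metis

lemma neg_inject: "a \<in> Hom K X Y \<Longrightarrow> b \<in> Hom K X Y \<Longrightarrow> neg K a = neg K b \<longleftrightarrow> a = b"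
  using neg_neg by metis

lemma add_idem_imp_zro:
  assumes a: "a \<in> Hom K X Y" and aa: "add K a a = a"
  shows "a = zro K X Y"
proof -
  have "a = add K (add K a a) (neg K a)"
    using add_assoc[OF a a neg_closed[OF a]] add_neg[OF a] add_zro[OF a] by simp
  then show ?thesis using aa add_neg[OF a] by simp
qed

lemma cmp_zro_right: "f \<in> Hom K X Y \<Longrightarrow> cmp K f (zro K W X) = zro K W Y"
  using add_idem_imp_zro[OF cmp_closed[OF zro_closed]]
    cmp_add_left[OF zro_closed zro_closed] add_zro[OF zro_closed] by metis

lemma cmp_zro_left: "f \<in> Hom K X Y \<Longrightarrow> cmp K (zro K Y Z) f = zro K X Z"
  using add_idem_imp_zro[OF cmp_closed[OF _ zro_closed]]
    cmp_add_right[OF zro_closed zro_closed] add_zro[OF zro_closed] by metis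

lemma neg_zro: "neg K (zro K X Y) = zro K X Y"
  using neg_unique[OF zro_closed zro_closed add_zro[OF zro_closed]] by simp

lemma cmp_neg_left:
  assumes g: "g \<in> Hom K Y Z" and f: "f \<in> Hom K X Y"
  shows "cmp K (neg K g) f = neg K (cmp K g f)"
proof -
  have "add K (cmp K g f) (cmp K (neg K g) f) = zro K X Z"
    using cmp_add_right[OF g neg_closed[OF g] f] add_neg[OF g] cmp_zro_left[OF f] by simp
  then show ?thesis using neg_unique cmp_closed f g neg_closed by metis
qed

lemma cmp_neg_right:
  assumes g: "g \<in> Hom K Y Z" and f: "f \<in> Hom K X Y"
  shows "cmp K g (neg K f) = neg K (cmp K g f)"
proof -
  have "add K (cmp K g f) (cmp K g (neg K f)) = zro K X Z"
    using cmp_add_left[OF f neg_closed[OF f] g] add_neg[OF f] cmp_zro_right[OF g] by simp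
  then show ?thesis using neg_unique cmp_closed f g neg_closed by metis
qed

lemma neg_add:
  assumes a: "a \<in> Hom K X Y" and b: "b \<in> Hom K X Y"
  shows "neg K (add K a b) = add K (neg K a) (neg K b)"
proof -
  have na: "neg K a \<in> Hom K X Y" and nb: "neg K b \<in> Hom K X Y" using a b neg_closed by auto
  have "add K (add K a b) (add K (neg K a) (neg K b))
      = add K a (add K b (add K (neg K b) (neg K a)))"
    using add_assoc[OF a b add_closed[OF na nb]] add_comm[OF na nb] by simp
  also have "\<dots> = add K a (add K (add K b (neg K b)) (neg K a))"
    using add_assoc[OF b nb na] by simp
  also have "\<dots> = zro K X Y" using add_neg[OF b] zro_add[OF na] add_neg[OF a] by simp
  finally show ?thesis using neg_unique a b na nb add_closed by metis
qed

lemma neg_diff: "f \<in> Hom K X Y \<Longrightarrow> g \<in> Hom K X Y \<Longrightarrow>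
    neg K (add K f (neg K g)) = add K g (neg K f)"
  using neg_add[OF _ neg_closed] neg_neg add_comm[OF neg_closed] by metis

lemma diff_add_cancel:
  assumes d: "d \<in> Hom K X Y" and x: "x \<in> Hom K X Y"
  shows "add K (add K d (neg K x)) x = d"
  using add_assoc[OF d neg_closed[OF x] x] add_comm[OF x neg_closed[OF x]] add_neg[OF x] add_zro[OF d]
  by simp

lemma diff_add_diff:
  assumes f: "f \<in> Hom K X Y" and g: "g \<in> Hom K X Y" and h: "h \<in> Hom K X Y"
  shows "add K (add K f (neg K g)) (add K g (neg K h)) = add K f (neg K h)"
  using add_assoc[OF f neg_closed[OF g] add_closed[OF g neg_closed[OF h]]]
    add_assoc[OF neg_closed[OF g] g neg_closed[OF h], symmetric]
    add_comm[OF g neg_closed[OF g]] add_neg[OF g] zro_add[OF neg_closed[OF h]]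
  by simp

lemma cmp_left_diff_distrib: "e1 \<in> Hom K Z Y \<Longrightarrow> e2 \<in> Hom K Z Y \<Longrightarrow> z \<in> Hom K C Z \<Longrightarrow>
    cmp K (add K e1 (neg K e2)) z = add K (cmp K e1 z) (neg K (cmp K e2 z))"
  by (simp add: cmp_add_right cmp_neg_left neg_closed)

lemma zero_objects_isomorphic:
  assumes "is_zero K Z0" and "is_zero K Z1"
  shows "isomorphic K Z0 Z1"
proof -
  have "cmp K (zro K B A) (zro K A B) = idm K A" if "is_zero K A" for A B
  proof -
    have "Hom K A A = {zro K A A}" using that unfolding is_zero_def by blast
    then show ?thesis
      using cmp_closed[OF zro_closed[of A B] zro_closed[of B A]] idm_closed[of A] by simp
  qed
  then have "iso K (zro K Z0 Z1) Z0 Z1"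
    unfolding iso_def using assms zro_closed by blast
  then show ?thesis unfolding isomorphic_def by blast
qed

lemma subcat_Int:
  assumes A: "subcat K \<A>" and B: "subcat K \<B>"
  shows "subcat K (\<A> \<inter> \<B>)"
proof -
  obtain Z0 Z1 where "Z0 \<in> \<A>" "is_zero K Z0" "Z1 \<in> \<B>" "is_zero K Z1"
    using A B unfolding subcat_def by blast
  then have "Z0 \<in> \<A> \<inter> \<B> \<and> is_zero K Z0"
    using zero_objects_isomorphic B unfolding subcat_def by blast
  then show ?thesis using A B unfolding subcat_def by blast
qed

lemma factors_through_zro:
  assumes "subcat K \<W>"
  shows "factors_through K \<W> X Y (zro K X Y)"
proof -
  obtain W0 where "W0 \<in> \<W>" using assms unfolding subcat_def by blast
  moreover have "zro K X Y = cmp K (zro K W0 Y) (zro K X W0)"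
    using cmp_zro_left[OF zro_closed] by simp
  ultimately show ?thesis unfolding factors_through_def using zro_closed by blast
qed

lemma factors_through_neg:
  "factors_through K \<W> X Y f \<Longrightarrow> factors_through K \<W> X Y (neg K f)"
  unfolding factors_through_def using cmp_neg_left neg_closed by metis

lemma factors_through_cmp_right:
  assumes f: "factors_through K \<W> X Y f" and z: "z \<in> Hom K C X"
  shows "factors_through K \<W> C Y (cmp K f z)"
proof -
  obtain W g h where "W \<in> \<W>" "g \<in> Hom K X W" "h \<in> Hom K W Y" "f = cmp K h g"
    using f unfolding factors_through_def by blast
  then show ?thesis unfolding factors_through_def using cmp_assoc[OF z] cmp_closed[OF z] by metis
qed

lemma factors_through_cmp_eq_zro:
  assumes f: "factors_through K \<W> X Y f" and b: "b \<in> Hom K S X"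
    and S_\<W>: "\<And>W k. W \<in> \<W> \<Longrightarrow> k \<in> Hom K S W \<Longrightarrow> k = zro K S W"
  shows "cmp K f b = zro K S Y"
proof -
  obtain W g h where W: "W \<in> \<W>" and g: "g \<in> Hom K X W" and h: "h \<in> Hom K W Y"
    and f_eq: "f = cmp K h g" using f unfolding factors_through_def by blast
  have "cmp K f b = cmp K h (cmp K g b)" using f_eq cmp_assoc[OF b g h] by simp
  also have "\<dots> = zro K S Y" using S_\<W>[OF W cmp_closed[OF b g]] cmp_zro_right[OF h] by simp
  finally show ?thesis .
qed

lemma biprod_factors_add:
  assumes P: "is_biprod K P W1 W2"
    and g1: "g1 \<in> Hom K X W1" and g2: "g2 \<in> Hom K X W2"
    and h1: "h1 \<in> Hom K W1 Y" and h2: "h2 \<in> Hom K W2 Y"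
  shows "\<exists>g \<in> Hom K X P. \<exists>h \<in> Hom K P Y. add K (cmp K h1 g1) (cmp K h2 g2) = cmp K h g"
proof -
  obtain i1 i2 p1 p2 where i1: "i1 \<in> Hom K W1 P" and i2: "i2 \<in> Hom K W2 P"
    and p1: "p1 \<in> Hom K P W1" and p2: "p2 \<in> Hom K P W2"
    and p1i1: "cmp K p1 i1 = idm K W1" and p2i2: "cmp K p2 i2 = idm K W2"
    and p1i2: "cmp K p1 i2 = zro K W2 W1" and p2i1: "cmp K p2 i1 = zro K W1 W2"
    using P unfolding is_biprod_def by blast
  define g where "g = add K (cmp K i1 g1) (cmp K i2 g2)"
  define h where "h = add K (cmp K h1 p1) (cmp K h2 p2)"
  have g: "g \<in> Hom K X P" unfolding g_def using add_closed cmp_closed g1 g2 i1 i2 by blast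
  have h: "h \<in> Hom K P Y" unfolding h_def using add_closed cmp_closed h1 h2 p1 p2 by blast
  have h_i: "cmp K h i = add K (cmp K h1 (cmp K p1 i)) (cmp K h2 (cmp K p2 i))"
    if i: "i \<in> Hom K W P" for i W
    unfolding h_def using cmp_add_right[OF cmp_closed[OF p1 h1] cmp_closed[OF p2 h2] i]
      cmp_assoc[OF i p1 h1] cmp_assoc[OF i p2 h2] by simp
  have hi1: "cmp K h i1 = h1"
    using h_i[OF i1] p1i1 p2i1 idm_right[OF h1] cmp_zro_right[OF h2] add_zro[OF h1] by simp
  have hi2: "cmp K h i2 = h2"
    using h_i[OF i2] p1i2 p2i2 idm_right[OF h2] cmp_zro_right[OF h1] zro_add[OF h2] by simp
  have "cmp K h g = add K (cmp K h1 g1) (cmp K h2 g2)"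
    unfolding g_def using cmp_add_left[OF cmp_closed[OF g1 i1] cmp_closed[OF g2 i2] h]
      cmp_assoc[OF g1 i1 h] cmp_assoc[OF g2 i2 h] hi1 hi2 by simp
  then show ?thesis using g h by metis
qed

lemma factors_through_add:
  assumes \<W>: "subcat K \<W>"
    and f1: "factors_through K \<W> X Y f1" and f2: "factors_through K \<W> X Y f2"
  shows "factors_through K \<W> X Y (add K f1 f2)"
proof -
  obtain W1 g1 h1 where W1: "W1 \<in> \<W>" and "g1 \<in> Hom K X W1" "h1 \<in> Hom K W1 Y"
    and "f1 = cmp K h1 g1" using f1 unfolding factors_through_def by blast
  moreover obtain W2 g2 h2 where W2: "W2 \<in> \<W>" and "g2 \<in> Hom K X W2" "h2 \<in> Hom K W2 Y"
    and "f2 = cmp K h2 g2" using f2 unfolding factors_through_def by blast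
  moreover obtain P where P: "is_biprod K P W1 W2" using biprod_exists by blast
  moreover have "P \<in> \<W>" using \<W> W1 W2 P unfolding subcat_def by blast
  ultimately show ?thesis unfolding factors_through_def using biprod_factors_add by metis
qed

lemma equiv_stable_rel:
  assumes "subcat K \<W>"
  shows "equiv (Hom K X Y) (stable_rel K \<W> X Y)"
proof (rule equivI)
  show "stable_rel K \<W> X Y \<subseteq> Hom K X Y \<times> Hom K X Y" unfolding stable_rel_def by auto
  show "refl_on (Hom K X Y) (stable_rel K \<W> X Y)"
    unfolding refl_on_def stable_rel_def using add_neg factors_through_zro[OF assms] by simp
  show "sym (stable_rel K \<W> X Y)"
    unfolding sym_def stable_rel_def using factors_through_neg neg_diff by fastforce
  show "trans (stable_rel K \<W> X Y)"
    unfolding trans_def stable_rel_def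
    using factors_through_add[OF assms] diff_add_diff by fastforce
qed

end

context triangulated
begin

lemma shm_zro: "shm K (zro K X Y) = zro K (sh K X) (sh K Y)"
  using add_idem_imp_zro[OF shm_closed[OF zro_closed]] shm_add[OF zro_closed zro_closed]
    add_zro[OF zro_closed] by metis

lemma shm_inj: "f \<in> Hom K X Y \<Longrightarrow> g \<in> Hom K X Y \<Longrightarrow> shm K f = shm K g \<Longrightarrow> f = g"
  using bij_betw_imp_inj_on[OF shm_fully_faithful] by (rule inj_onD)

lemma shm_surj: "c \<in> Hom K (sh K X) (sh K Y) \<Longrightarrow> \<exists>e \<in> Hom K X Y. shm K e = c"
  using bij_betw_imp_surj_on[OF shm_fully_faithful[of X Y]] by (metis imageE)

lemma zro_if_shifted_Hom_trivial:
  assumes "Hom K (sh K A) (sh K B) = {zro K (sh K A) (sh K B)}" and f: "f \<in> Hom K A B"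
  shows "f = zro K A B"
proof (rule shm_inj[OF f zro_closed])
  show "shm K f = shm K (zro K A B)" using assms shm_closed[OF f] shm_zro by simp
qed

text \<open>Exactness of the Hom functors at the middle of a distinguished triangle, obtained from
  TR3 between a rotation of it and a rotated trivial triangle.\<close>

lemma dist_lift_along_fst:
  assumes d: "dist K A Y N i p q" and c: "c \<in> Hom K X Y" and pc: "cmp K p c = zro K X N"
  shows "\<exists>e \<in> Hom K X A. cmp K i e = c"
proof -
  obtain Z0 where Z0: "is_zero K Z0" using zero_exists by blast
  have t1: "dist K X Z0 (sh K X) (zro K X Z0) (zro K Z0 (sh K X)) (neg K (shm K (idm K X)))"
    using dist_id[OF Z0] dist_rotate by blast
  have t2: "dist K Y N (sh K A) p q (neg K (shm K i))" using d dist_rotate by blast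
  have i: "i \<in> Hom K A Y" using dist_typed[OF d] by auto
  have "cmp K (zro K Z0 N) (zro K X Z0) = cmp K p c" using pc cmp_zro_left[OF zro_closed] by simp
  then obtain g where g: "g \<in> Hom K (sh K X) (sh K A)"
    and g_eq: "cmp K (neg K (shm K i)) g = cmp K (shm K c) (neg K (shm K (idm K X)))"
    using dist_morph[OF t1 t2 c zro_closed] by blast
  obtain e where e: "e \<in> Hom K X A" and ge: "shm K e = g" using shm_surj g by blast
  have "neg K (shm K (cmp K i e)) = neg K (shm K c)"
    using g_eq ge shm_cmp[OF e i] shm_idm cmp_neg_left[OF shm_closed[OF i] shm_closed[OF e]]
      cmp_neg_right[OF shm_closed[OF c] idm_closed] idm_right[OF shm_closed[OF c]] by simp
  then have "cmp K i e = c"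
    using neg_inject shm_closed shm_inj cmp_closed[OF e i] c by metis
  then show ?thesis using e by blast
qed

lemma dist_extend_along_snd:
  assumes d: "dist K X Y Z f g h" and c: "c \<in> Hom K Y W" and cf: "cmp K c f = zro K X W"
  shows "\<exists>e \<in> Hom K Z W. cmp K e g = c"
proof -
  obtain Z0 where Z0: "is_zero K Z0" using zero_exists by blast
  have t1: "dist K Z0 (sh K W) (sh K W) (zro K Z0 (sh K W)) (neg K (shm K (idm K W)))
      (neg K (shm K (zro K W Z0)))"
    using dist_id[OF Z0] dist_rotate by blast
  have t2: "dist K (sh K X) (sh K Y) (sh K Z) (neg K (shm K f)) (neg K (shm K g)) (neg K (shm K h))"
    using d dist_rotate by blast
  have f: "f \<in> Hom K X Y" and g: "g \<in> Hom K Y Z" using dist_typed[OF d] by auto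
  have "cmp K (shm K c) (neg K (shm K f)) = neg K (shm K (cmp K c f))"
    using cmp_neg_right[OF shm_closed[OF c] shm_closed[OF f]] shm_cmp[OF f c] by simp
  also have "\<dots> = cmp K (zro K Z0 (sh K W)) (zro K (sh K X) Z0)"
    using cf shm_zro neg_zro cmp_zro_left[OF zro_closed] by simp
  finally obtain \<gamma> where \<gamma>: "\<gamma> \<in> Hom K (sh K Z) (sh K W)"
    and \<gamma>_eq: "cmp K \<gamma> (neg K (shm K g)) = cmp K (neg K (shm K (idm K W))) (shm K c)"
    using dist_morph[OF t2 t1 zro_closed shm_closed[OF c]] by blast
  obtain e where e: "e \<in> Hom K Z W" and e\<gamma>: "shm K e = \<gamma>" using shm_surj \<gamma> by blast
  have "neg K (shm K (cmp K e g)) = neg K (shm K c)"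
    using \<gamma>_eq e\<gamma> shm_cmp[OF g e] shm_idm cmp_neg_right[OF shm_closed[OF e] shm_closed[OF g]]
      cmp_neg_left[OF idm_closed shm_closed[OF c]] idm_left[OF shm_closed[OF c]] by simp
  then have "cmp K e g = c"
    using neg_inject shm_closed shm_inj cmp_closed[OF g e] c by metis
  then show ?thesis using e by blast
qed

lemma ext1_zero_shift_sub:
  assumes e: "ext1_zero K \<X> \<V>" and A: "A \<in> \<X>" and N: "N \<in> shift_sub K \<V>"
    and f: "f \<in> Hom K A N"
  shows "f = zro K A N"
proof -
  obtain V \<phi> \<psi> where V: "V \<in> \<V>" and \<phi>: "\<phi> \<in> Hom K N (sh K V)" and \<psi>: "\<psi> \<in> Hom K (sh K V) N"
    and \<psi>\<phi>: "cmp K \<psi> \<phi> = idm K N"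
    using N unfolding shift_sub_def isomorphic_def iso_def by blast
  have \<phi>f: "cmp K \<phi> f = zro K A (sh K V)"
    using e A V cmp_closed[OF f \<phi>] unfolding ext1_zero_def by blast
  have "f = cmp K \<psi> (cmp K \<phi> f)" using \<psi>\<phi> cmp_assoc[OF f \<phi> \<psi>] idm_left[OF f] by simp
  then show ?thesis using \<phi>f cmp_zro_right[OF \<psi>] by simp
qed

lemma factors_through_of_ext1_zero:
  assumes e: "ext1_zero K \<X> \<V>" and A: "A \<in> \<X>"
    and Y: "Y \<in> ext_star K \<W> (shift_sub K \<V>)" and f: "f \<in> Hom K A Y"
  shows "factors_through K \<W> A Y f"
proof -
  obtain W N \<iota> p q where W: "W \<in> \<W>" and N: "N \<in> shift_sub K \<V>" and d: "dist K W Y N \<iota> p q"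
    using Y unfolding ext_star_def by blast
  have \<iota>: "\<iota> \<in> Hom K W Y" and p: "p \<in> Hom K Y N" using dist_typed[OF d] by auto
  have "cmp K p f = zro K A N" using ext1_zero_shift_sub[OF e A N cmp_closed[OF f p]] .
  then obtain g where "g \<in> Hom K A W" "cmp K \<iota> g = f" using dist_lift_along_fst[OF d f] by blast
  then show ?thesis unfolding factors_through_def using W \<iota> by blast
qed

text \<open>If \<open>d \<circ> z = \<beta> \<circ> \<alpha>\<close> with \<open>\<alpha> : C \<rightarrow> W \<in> \<W>\<close>, then \<open>\<alpha>\<close> kills \<open>s\<close>, so \<open>\<alpha> = \<alpha>' \<circ> z\<close>;
  the difference \<open>d - \<beta> \<circ> \<alpha>'\<close> kills \<open>z\<close>, hence equals \<open>\<gamma> \<circ> h\<close> with \<open>\<gamma> : S[1] \<rightarrow> Y\<close>.\<close>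

lemma factors_through_cmp_iff:
  assumes \<W>: "subcat K \<W>" and tri: "dist K S C Z s z h"
    and S_\<W>: "\<And>W k. W \<in> \<W> \<Longrightarrow> k \<in> Hom K S W \<Longrightarrow> k = zro K S W"
    and shS_Y: "\<And>\<gamma>. \<gamma> \<in> Hom K (sh K S) Y \<Longrightarrow> factors_through K \<W> (sh K S) Y \<gamma>"
    and d: "d \<in> Hom K Z Y"
  shows "factors_through K \<W> C Y (cmp K d z) \<longleftrightarrow> factors_through K \<W> Z Y d"
proof
  have s: "s \<in> Hom K S C" and z: "z \<in> Hom K C Z" using dist_typed[OF tri] by auto
  assume "factors_through K \<W> C Y (cmp K d z)"
  then obtain W \<alpha> \<beta> where W: "W \<in> \<W>" and \<alpha>: "\<alpha> \<in> Hom K C W" and \<beta>: "\<beta> \<in> Hom K W Y"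
    and dz: "cmp K d z = cmp K \<beta> \<alpha>" unfolding factors_through_def by blast
  obtain \<alpha>' where \<alpha>': "\<alpha>' \<in> Hom K Z W" and \<alpha>'z: "cmp K \<alpha>' z = \<alpha>"
    using dist_extend_along_snd[OF tri \<alpha> S_\<W>[OF W cmp_closed[OF s \<alpha>]]] by blast
  have \<beta>\<alpha>': "cmp K \<beta> \<alpha>' \<in> Hom K Z Y" using cmp_closed[OF \<alpha>' \<beta>] .
  define m where "m = add K d (neg K (cmp K \<beta> \<alpha>'))"
  have m: "m \<in> Hom K Z Y" unfolding m_def using add_closed neg_closed d \<beta>\<alpha>' by blast
  have "cmp K m z = add K (cmp K \<beta> \<alpha>) (neg K (cmp K \<beta> \<alpha>))"
    unfolding m_def using cmp_left_diff_distrib[OF d \<beta>\<alpha>' z] cmp_assoc[OF z \<alpha>' \<beta>] \<alpha>'z dz by simp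
  then have "cmp K m z = zro K C Y" using add_neg cmp_closed[OF \<alpha> \<beta>] by simp
  moreover have "dist K C Z (sh K S) z h (neg K (shm K s))" using tri dist_rotate by blast
  ultimately obtain \<gamma> where \<gamma>: "\<gamma> \<in> Hom K (sh K S) Y" and \<gamma>h: "cmp K \<gamma> h = m"
    using dist_extend_along_snd[OF _ m] by blast
  have "factors_through K \<W> Z Y m"
    using factors_through_cmp_right[OF shS_Y[OF \<gamma>]] \<gamma>h dist_typed[OF tri] by fastforce
  moreover have "factors_through K \<W> Z Y (cmp K \<beta> \<alpha>')"
    unfolding factors_through_def using W \<alpha>' \<beta> by blast
  ultimately have "factors_through K \<W> Z Y (add K m (cmp K \<beta> \<alpha>'))"
    by (rule factors_through_add[OF \<W>])
  then show "factors_through K \<W> Z Y d" unfolding m_def using diff_add_cancel[OF d \<beta>\<alpha>'] by simp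
next
  show "factors_through K \<W> Z Y d \<Longrightarrow> factors_through K \<W> C Y (cmp K d z)"
    using factors_through_cmp_right dist_typed[OF tri] by blast
qed

end

lemma some_in_quotient:
  assumes r: "equiv A r" and F: "F \<in> A // r"
  shows "(SOME x. x \<in> F) \<in> A" and "F = r `` {SOME x. x \<in> F}"
proof -
  obtain x where F_x: "F = r `` {x}" and x: "x \<in> A" using F by (rule quotientE)
  have "x \<in> F" using equiv_class_self[OF r x] F_x by simp
  then have "(SOME x. x \<in> F) \<in> F" by (rule someI)
  then have x_rep: "(x, SOME x. x \<in> F) \<in> r" using F_x by simp
  then show "(SOME x. x \<in> F) \<in> A" using equiv_type[OF r] by blast
  show "F = r `` {SOME x. x \<in> F}" using F_x equiv_class_eq[OF r x_rep] by (rule trans)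
qed

lemma bij_betw_quotient_map:
  assumes r: "equiv A r" and s: "equiv B s"
    and \<phi>: "\<And>x. x \<in> A \<Longrightarrow> \<phi> x \<in> B"
    and \<phi>_rel: "\<And>x y. x \<in> A \<Longrightarrow> y \<in> A \<Longrightarrow> (\<phi> x, \<phi> y) \<in> s \<longleftrightarrow> (x, y) \<in> r"
    and \<phi>_surj: "\<And>y. y \<in> B \<Longrightarrow> \<exists>x \<in> A. \<phi> x = y"
  shows "bij_betw (\<lambda>F. s `` {\<phi> (SOME x. x \<in> F)}) (A // r) (B // s)"
proof (rule bij_betw_imageI)
  show "inj_on (\<lambda>F. s `` {\<phi> (SOME x. x \<in> F)}) (A // r)"
  proof (rule inj_onI)
    fix F G assume F: "F \<in> A // r" and G: "G \<in> A // r"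
      and FG: "s `` {\<phi> (SOME x. x \<in> F)} = s `` {\<phi> (SOME x. x \<in> G)}"
    have rep: "(SOME x. x \<in> F) \<in> A" "(SOME x. x \<in> G) \<in> A"
      using some_in_quotient(1)[OF r] F G by auto
    then have "(SOME x. x \<in> F, SOME x. x \<in> G) \<in> r"
      using FG eq_equiv_class_iff[OF s \<phi> \<phi>] \<phi>_rel by simp
    then have "r `` {SOME x. x \<in> F} = r `` {SOME x. x \<in> G}" by (rule equiv_class_eq[OF r])
    then show "F = G"
      using some_in_quotient(2)[OF r F, symmetric] some_in_quotient(2)[OF r G, symmetric]
      by (rule box_equals)
  qed
  show "(\<lambda>F. s `` {\<phi> (SOME x. x \<in> F)}) ` (A // r) = B // s"
  proof
    show "(\<lambda>F. s `` {\<phi> (SOME x. x \<in> F)}) ` (A // r) \<subseteq> B // s"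
      using some_in_quotient(1)[OF r] by (blast intro: quotientI \<phi>)
  next
    show "B // s \<subseteq> (\<lambda>F. s `` {\<phi> (SOME x. x \<in> F)}) ` (A // r)"
    proof
      fix G assume "G \<in> B // s"
      then obtain y where G: "G = s `` {y}" and "y \<in> B" by (rule quotientE)
      then obtain x where x: "x \<in> A" and "\<phi> x = y" using \<phi>_surj by blast
      define F where "F = r `` {x}"
      have F: "F \<in> A // r" unfolding F_def using x by (rule quotientI)
      have rep: "(SOME x. x \<in> F) \<in> A" using some_in_quotient(1)[OF r F] .
      have "r `` {x} = r `` {SOME x. x \<in> F}" using some_in_quotient(2)[OF r F] unfolding F_def .
      then have "(x, SOME x. x \<in> F) \<in> r" using eq_equiv_class_iff[OF r x rep] by simp
      then have "G = s `` {\<phi> (SOME x. x \<in> F)}"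
        using G \<open>\<phi> x = y\<close> \<phi>_rel[OF x rep] equiv_class_eq[OF s] by simp
      then show "G \<in> (\<lambda>F. s `` {\<phi> (SOME x. x \<in> F)}) ` (A // r)" using F by blast
    qed
  qed
qed

theorem proposition3p6:
  fixes K :: "('o, 'm) tcat"
  assumes "triangulated K"
    and "twin_cotorsion_pair K \<S> \<T> \<U> \<V>"
    and "U \<in> \<U>" and "V \<in> \<V>" and "dist K V U C f a g"
    and "sh K S' \<in> \<S>" and "T \<in> \<T>" and "dist K S' U T b b' b''"
    and "dist K S' C Z (cmp K a b) z h"
    and "Y \<in> ext_star K (\<T> \<inter> \<U>) (shift_sub K \<V>)"
  shows "bij_betw (\<lambda>F. stclass K (\<T> \<inter> \<U>) C Y (cmp K (SOME e. e \<in> F) z))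
           (stable_hom K (\<T> \<inter> \<U>) Z Y) (stable_hom K (\<T> \<inter> \<U>) C Y)"
proof -
  interpret triangulated K by fact
  have ST: "subcat K \<T>" "ext1_zero K \<S> \<T>" and UV: "subcat K \<U>" "ext1_zero K \<U> \<V>"
    and SV: "ext1_zero K \<S> \<V>"
    using assms(2) unfolding twin_cotorsion_pair_def cotorsion_pair_def by auto
  have \<W>: "subcat K (\<T> \<inter> \<U>)" using subcat_Int[OF ST(1) UV(1)] .
  have a: "a \<in> Hom K U C" and b: "b \<in> Hom K S' U" and z: "z \<in> Hom K C Z"
    using dist_typed assms(5,8,9) by auto
  have S'_\<W>: "k = zro K S' W" if "W \<in> \<T> \<inter> \<U>" "k \<in> Hom K S' W" for W k
    using zro_if_shifted_Hom_trivial ST(2) assms(6) that unfolding ext1_zero_def by blast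
  have cmp_z_iff: "factors_through K (\<T> \<inter> \<U>) C Y (cmp K d z)
      \<longleftrightarrow> factors_through K (\<T> \<inter> \<U>) Z Y d" if "d \<in> Hom K Z Y" for d
    using factors_through_cmp_iff[OF \<W> assms(9) S'_\<W> _ that]
      factors_through_of_ext1_zero[OF SV assms(6,10)] by blast
  have cmp_z_surj: "\<exists>e \<in> Hom K Z Y. cmp K e z = c" if c: "c \<in> Hom K C Y" for c
  proof -
    have "factors_through K (\<T> \<inter> \<U>) U Y (cmp K c a)"
      using factors_through_of_ext1_zero[OF UV(2) assms(3,10)] cmp_closed[OF a c] .
    then have "cmp K (cmp K c a) b = zro K S' Y" using factors_through_cmp_eq_zro b S'_\<W> by blast
    then show ?thesis using dist_extend_along_snd[OF assms(9) c] cmp_assoc[OF b a c] by simp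
  qed
  show ?thesis
    unfolding stable_hom_def stclass_def
  proof (rule bij_betw_quotient_map[OF equiv_stable_rel[OF \<W>] equiv_stable_rel[OF \<W>]])
    show "(cmp K e1 z, cmp K e2 z) \<in> stable_rel K (\<T> \<inter> \<U>) C Y
        \<longleftrightarrow> (e1, e2) \<in> stable_rel K (\<T> \<inter> \<U>) Z Y"
      if "e1 \<in> Hom K Z Y" "e2 \<in> Hom K Z Y" for e1 e2
      using that cmp_z_iff[OF add_closed[OF _ neg_closed]] cmp_left_diff_distrib[OF _ _ z]
        cmp_closed[OF z] unfolding stable_rel_def by auto
  qed (use cmp_closed[OF z] cmp_z_surj in auto)
qed

end
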